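(* Let $G$ be a finite simple connected graph whose block tree has more than one vertex, let $B$ be an end block of $G$, and let $u$ be the unique cut vertex of $G$ contained in $B$. Assume every vertex of $B$ other than $u$ is adjacent to $u$. Let $H$ be the graph obtained from $G$ by contracting $B$ into the vertex $u$ (equivalently, deleting $V(B)\setminus\{u\}$). Then $c_{\infty}(H)\ge c_{\infty}(G)$.
   Context: Cops and Robber with an infinitely fast robber: the game is played on a graph $G$. A set of cops first choose initial vertices (several cops may share a vertex); then the robber, knowing their positions, chooses a vertex. Then the players move in alternating rounds, cops first. In the cops' turn each cop either stays or moves to an adjacent vertex; in the robber's turn she either stays or moves along any path of $G$ starting at her current vertex that contains no vertex currently occupied by a cop. The cops win if at some point a cop moves to the vertex occupied by the robber. $c_{\infty}(G)$ is the minimum number of cops for which the cops have a strategy that guarantees a win. A block of $G$ is either a maximal 2-connected subgraph or an edge not contained in any 2-connected subgraph. The block tree $B(G)$ is the bipartite tree whose vertices are the blocks and cut vertices of $G$, a block adjacent to a cut vertex iff it contains it. End blocks are blocks that are leaves of $B(G)$. *)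

theory Defs
  imports Main
begin

definition simple_graph :: "'a set \<Rightarrow> ('a \<Rightarrow> 'a \<Rightarrow> bool) \<Rightarrow> bool" where
  "simple_graph V E \<longleftrightarrow> finite V \<and> (\<forall>x y. E x y \<longrightarrow> x \<in> V \<and> y \<in> V)
     \<and> (\<forall>x y. E x y \<longrightarrow> E y x) \<and> (\<forall>x. \<not> E x x)"

definition reach_in :: "('a \<Rightarrow> 'a \<Rightarrow> bool) \<Rightarrow> 'a set \<Rightarrow> 'a \<Rightarrow> 'a \<Rightarrow> bool" where
  "reach_in E S x y \<longleftrightarrow> x \<in> S \<and> (\<lambda>a b. E a b \<and> a \<in> S \<and> b \<in> S)\<^sup>*\<^sup>* x y"

definition connected_in :: "('a \<Rightarrow> 'a \<Rightarrow> bool) \<Rightarrow> 'a set \<Rightarrow> bool" where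
  "connected_in E S \<longleftrightarrow> (\<forall>x\<in>S. \<forall>y\<in>S. reach_in E S x y)"

definition cut_vertex :: "'a set \<Rightarrow> ('a \<Rightarrow> 'a \<Rightarrow> bool) \<Rightarrow> 'a \<Rightarrow> bool" where
  "cut_vertex V E v \<longleftrightarrow> v \<in> V \<and> \<not> connected_in E (V - {v})"

text \<open>Nonseparable vertex set: at least two vertices, connected, and no vertex
  separates it (i.e. a 2-connected induced subgraph or a single edge).\<close>
definition nonsep :: "('a \<Rightarrow> 'a \<Rightarrow> bool) \<Rightarrow> 'a set \<Rightarrow> bool" where
  "nonsep E S \<longleftrightarrow> 2 \<le> card S \<and> finite S \<and> connected_in E S
     \<and> (\<forall>x\<in>S. connected_in E (S - {x}))"

definition is_block :: "'a set \<Rightarrow> ('a \<Rightarrow> 'a \<Rightarrow> bool) \<Rightarrow> 'a set \<Rightarrow> bool" where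
  "is_block V E B \<longleftrightarrow> B \<subseteq> V \<and> nonsep E B \<and> (\<forall>S. B \<subset> S \<and> S \<subseteq> V \<longrightarrow> \<not> nonsep E S)"

definition block_tree_vertices :: "'a set \<Rightarrow> ('a \<Rightarrow> 'a \<Rightarrow> bool) \<Rightarrow> ('a set + 'a) set" where
  "block_tree_vertices V E = Inl ` {B. is_block V E B} \<union> Inr ` {v. cut_vertex V E v}"

text \<open>End block: a block that is a leaf of B(G), i.e. contains exactly one cut vertex.\<close>
definition end_block :: "'a set \<Rightarrow> ('a \<Rightarrow> 'a \<Rightarrow> bool) \<Rightarrow> 'a set \<Rightarrow> bool" where
  "end_block V E B \<longleftrightarrow> is_block V E B \<and> card {v\<in>B. cut_vertex V E v} = 1"

text \<open>Cops and robber with an infinitely fast robber.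
  A position is (cop positions as a list, robber vertex), cops to move,
  robber not on a cop.  cops_win_from cs r: cops can force capture in finitely many rounds
  (least fixed point = attractor of the reachability game).\<close>
inductive cops_win_from :: "'a set \<Rightarrow> ('a \<Rightarrow> 'a \<Rightarrow> bool) \<Rightarrow> 'a list \<Rightarrow> 'a \<Rightarrow> bool"
  for V E where
  step: "list_all2 (\<lambda>c c'. c' = c \<or> E c c') cs cs' \<Longrightarrow>
         (r \<in> set cs' \<or> (\<forall>r'. reach_in E (V - set cs') r r' \<longrightarrow> cops_win_from V E cs' r'))
         \<Longrightarrow> cops_win_from V E cs r"

definition cops_win :: "'a set \<Rightarrow> ('a \<Rightarrow> 'a \<Rightarrow> bool) \<Rightarrow> nat \<Rightarrow> bool" where
  "cops_win V E k \<longleftrightarrow> (\<exists>cs. length cs = k \<and> set cs \<subseteq> V \<and>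
      (\<forall>r\<in>V - set cs. cops_win_from V E cs r))"

definition c_inf :: "'a set \<Rightarrow> ('a \<Rightarrow> 'a \<Rightarrow> bool) \<Rightarrow> nat" where
  "c_inf V E = (LEAST k. cops_win V E k)"

end

theory Submission
  imports Defs
begin

text \<open>Let \<open>D = B - {u}\<close>. Every vertex of \<open>D\<close> has all its neighbours in \<open>B\<close>: a
  neighbour \<open>w\<close> outside \<open>B\<close> of some \<open>b \<in> D\<close> could, because \<open>b\<close> is not a cut vertex, be
  joined back to \<open>B - {b}\<close> outside \<open>B\<close>, and an inclusion-minimal such connection would
  enlarge the block to a bigger nonseparable set. So the only exit of \<open>D\<close> is \<open>u\<close>, which is
  adjacent to all of \<open>D\<close>. Cops playing a winning strategy of \<open>H\<close> in \<open>G\<close> chase the robber's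
  shadow, which is \<open>u\<close> while the robber is in \<open>D\<close> and the robber herself otherwise. When the
  shadow is caught at \<open>u\<close> with the robber in \<open>D\<close>, the cop on \<open>u\<close> confines her to \<open>D\<close> and
  steps onto her in the next round.\<close>

lemma reach_in_induct[consumes 1, case_names base step]:
  assumes "reach_in E S x y" and "x \<in> S \<Longrightarrow> P x"
    and "\<And>y z. reach_in E S x y \<Longrightarrow> E y z \<Longrightarrow> z \<in> S \<Longrightarrow> P y \<Longrightarrow> P z"
  shows "P y"
proof -
  have x: "x \<in> S" and r: "(\<lambda>a b. E a b \<and> a \<in> S \<and> b \<in> S)\<^sup>*\<^sup>* x y"
    using assms(1) unfolding reach_in_def by auto
  from r show ?thesis
  proof (induction rule: rtranclp_induct)
    case base
    then show ?case using assms(2) x by simp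
  next
    case (step y z)
    then show ?case using assms(3)[of y z] x unfolding reach_in_def by auto
  qed
qed

lemma reach_in_refl: "x \<in> S \<Longrightarrow> reach_in E S x x"
  by (simp add: reach_in_def)

lemma reach_in_mem: "reach_in E S x y \<Longrightarrow> y \<in> S"
  by (induction rule: reach_in_induct) auto

lemma reach_in_snoc: "reach_in E S x y \<Longrightarrow> E y z \<Longrightarrow> z \<in> S \<Longrightarrow> reach_in E S x z"
  using reach_in_mem[of E S x y] unfolding reach_in_def
  by (auto intro: rtranclp.rtrancl_into_rtrancl)

lemma reach_in_edge: "E x y \<Longrightarrow> x \<in> S \<Longrightarrow> y \<in> S \<Longrightarrow> reach_in E S x y"
  by (rule reach_in_snoc[OF reach_in_refl])

lemma reach_in_trans: assumes "reach_in E S x y" and "reach_in E S y z" shows "reach_in E S x z"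
  using assms(2) by (induction rule: reach_in_induct) (auto intro: assms(1) reach_in_snoc)

lemma reach_in_mono: "reach_in E S x y \<Longrightarrow> S \<subseteq> T \<Longrightarrow> reach_in E T x y"
  by (induction rule: reach_in_induct) (auto intro: reach_in_snoc reach_in_refl)

lemma reach_in_sym:
  assumes sym: "symp E" and "reach_in E S x y"
  shows "reach_in E S y x"
  using assms(2)
proof (induction rule: reach_in_induct)
  case base
  then show ?case by (rule reach_in_refl)
next
  case (step y z)
  have "reach_in E S z y"
    using reach_in_edge[of E z y S] sympD[OF sym step(2)] step(3) reach_in_mem[OF step(1)] by blast
  then show ?case using step(4) by (rule reach_in_trans)
qed

lemma reach_in_map:
  assumes "reach_in E S a b" and "\<And>x. x \<in> S \<Longrightarrow> p x \<in> T"
    and "\<And>x y. x \<in> S \<Longrightarrow> y \<in> S \<Longrightarrow> E x y \<Longrightarrow> p x = p y \<or> E' (p x) (p y)"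
  shows "reach_in E' T (p a) (p b)"
  using assms(1)
proof (induction rule: reach_in_induct)
  case base
  then show ?case using assms(2) by (simp add: reach_in_refl)
next
  case (step y z)
  from assms(3)[OF reach_in_mem[OF step(1)] step(3) step(2)] show ?case
    using step(4) assms(2)[OF step(3)] by (auto intro: reach_in_snoc)
qed

lemma reach_in_component: "reach_in E S a z \<Longrightarrow> reach_in E {y. reach_in E S a y} a z"
  by (induction rule: reach_in_induct) (auto intro: reach_in_refl reach_in_snoc)

lemma connected_in_reach:
  "connected_in E S \<Longrightarrow> x \<in> S \<Longrightarrow> y \<in> S \<Longrightarrow> S \<subseteq> T \<Longrightarrow> reach_in E T x y"
  unfolding connected_in_def by (meson reach_in_mono)

lemma connected_in_hub:
  assumes sym: "symp E" and hub: "\<And>y. y \<in> S \<Longrightarrow> reach_in E S y h"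
  shows "connected_in E S"
  unfolding connected_in_def
proof (intro ballI)
  fix x y assume "x \<in> S" "y \<in> S"
  show "reach_in E S x y"
    using reach_in_trans[OF hub[OF \<open>x \<in> S\<close>] reach_in_sym[OF sym hub[OF \<open>y \<in> S\<close>]]] .
qed

lemma connected_in_Un:
  assumes sym: "symp E" and A: "connected_in E A" "h \<in> A"
    and P: "\<And>y. y \<in> P \<Longrightarrow> reach_in E (A \<union> P) y h"
  shows "connected_in E (A \<union> P)"
proof (rule connected_in_hub[OF sym])
  fix y assume "y \<in> A \<union> P"
  then show "reach_in E (A \<union> P) y h"
    using P connected_in_reach[OF A(1) _ A(2), of y "A \<union> P"] by blast
qed

lemma reach_in_first_entry:
  assumes "reach_in E S a c" "a \<notin> B" "c \<in> B"
  shows "\<exists>t c'. reach_in E (S - B) a t \<and> c' \<in> B \<and> c' \<in> S \<and> E t c'"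
proof -
  from assms(1) have "(c \<notin> B \<and> reach_in E (S - B) a c)
      \<or> (\<exists>t c'. reach_in E (S - B) a t \<and> c' \<in> B \<and> c' \<in> S \<and> E t c')"
    by (induction rule: reach_in_induct) (use assms(2) in \<open>auto intro: reach_in_refl reach_in_snoc\<close>)
  then show ?thesis using assms(3) by blast
qed

lemma reach_in_Diff_component:
  assumes sym: "symp E" and "reach_in E P w z" "w \<notin> Q" "z \<notin> Q"
    and closed: "\<And>a c. a \<in> Q \<Longrightarrow> c \<in> P - {x} \<Longrightarrow> E a c \<Longrightarrow> c \<in> Q"
  shows "reach_in E (P - Q) w z"
proof -
  from \<open>reach_in E P w z\<close>
  have "(z \<notin> Q \<longrightarrow> reach_in E (P - Q) w z) \<and> (z \<in> Q \<longrightarrow> reach_in E (P - Q) w x)"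
  proof (induction rule: reach_in_induct)
    case base
    then show ?case using \<open>w \<notin> Q\<close> by (auto intro: reach_in_refl)
  next
    case (step y z)
    have "y \<in> P" using reach_in_mem[OF step(1)] .
    consider "y \<in> Q" "z \<in> Q" | "y \<in> Q" "z \<notin> Q" | "y \<notin> Q" "z \<in> Q" | "y \<notin> Q" "z \<notin> Q"
      by blast
    then show ?case
    proof cases
      case 2
      then have "z = x" using closed[of y z] step(2,3) by blast
      then show ?thesis using step(4) 2 by blast
    next
      case 3
      then have "y = x" using closed[of z y] sympD[OF sym step(2)] \<open>y \<in> P\<close> by blast
      then show ?thesis using step(4) 3 by blast
    qed (use step in \<open>auto intro: reach_in_snoc\<close>)
  qed
  then show ?thesis using \<open>z \<notin> Q\<close> by blast
qed

section \<open>Vertices of a block that are not cut vertices\<close>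

text \<open>Together with an edge from \<open>w\<close> to \<open>b\<close>, an ear links \<open>b\<close> to a second vertex of \<open>B\<close>
  through vertices outside \<open>B\<close>.\<close>
definition ear :: "('a \<Rightarrow> 'a \<Rightarrow> bool) \<Rightarrow> 'a set \<Rightarrow> 'a \<Rightarrow> 'a \<Rightarrow> 'a set \<Rightarrow> bool" where
  "ear E B b w P \<longleftrightarrow> P \<inter> B = {} \<and> w \<in> P \<and> (\<forall>z\<in>P. reach_in E P w z)
     \<and> (\<exists>t\<in>P. \<exists>c\<in>B - {b}. E t c)"

lemma ex_minimal_ear:
  assumes "ear E B b w P0" "finite P0"
  obtains P where "ear E B b w P" "P \<subseteq> P0" "finite P" "\<And>Q. Q \<subset> P \<Longrightarrow> \<not> ear E B b w Q"
proof -
  obtain P where P: "ear E B b w P \<and> P \<subseteq> P0"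
    and least: "\<And>Q. ear E B b w Q \<and> Q \<subseteq> P0 \<Longrightarrow> card P \<le> card Q"
    using ex_has_least_nat[of "\<lambda>P. ear E B b w P \<and> P \<subseteq> P0" P0 card] assms by blast
  have "finite P" using P assms(2) finite_subset by blast
  moreover have "\<not> ear E B b w Q" if "Q \<subset> P" for Q
    using least[of Q] psubset_card_mono[OF \<open>finite P\<close> that] that P by auto
  ultimately show thesis using that P by blast
qed

text \<open>In a minimal ear no vertex separates the rest of the ear from \<open>B\<close>: the component of
  \<open>y\<close> in \<open>P - {x}\<close> must touch \<open>B\<close>, for otherwise removing it leaves a smaller ear.\<close>
lemma minimal_ear_reach:
  assumes sym: "symp E"
    and connB: "connected_in E B" and bB: "b \<in> B" and wb: "E w b"
    and P: "ear E B b w P" "finite P" and minP: "\<And>Q. Q \<subset> P \<Longrightarrow> \<not> ear E B b w Q"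
    and xP: "x \<in> P" and yP: "y \<in> P" "y \<noteq> x"
  shows "reach_in E (B \<union> P - {x}) y b"
proof (rule ccontr)
  assume no_reach: "\<not> reach_in E (B \<union> P - {x}) y b"
  define Q where "Q = {z. reach_in E (P - {x}) y z}"
  have QP: "Q \<subseteq> P - {x}" unfolding Q_def by (auto dest: reach_in_mem)
  have "y \<in> Q" using yP unfolding Q_def by (auto intro: reach_in_refl)
  have "x \<notin> B" using xP P(1) unfolding ear_def by auto
  have Q_off_B: False if "z \<in> Q" "c \<in> B" "E z c" for z c
  proof -
    have "reach_in E (P - {x}) y z" using \<open>z \<in> Q\<close> unfolding Q_def by simp
    then have yz: "reach_in E (B \<union> P - {x}) y z" by (rule reach_in_mono) blast
    have zc: "reach_in E (B \<union> P - {x}) z c"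
      by (rule reach_in_edge) (use that QP \<open>x \<notin> B\<close> in auto)
    have cb: "reach_in E (B \<union> P - {x}) c b"
      by (rule connected_in_reach[OF connB \<open>c \<in> B\<close> bB]) (use \<open>x \<notin> B\<close> in blast)
    show False using no_reach reach_in_trans[OF reach_in_trans[OF yz zc] cb] by blast
  qed
  have Q_closed: "c \<in> Q" if "a \<in> Q" "c \<in> P - {x}" "E a c" for a c
    using that reach_in_snoc[of E "P - {x}" y a c] unfolding Q_def by blast
  obtain t c where t: "t \<in> P" "c \<in> B - {b}" "E t c" and "w \<in> P"
    and Preach: "\<And>z. z \<in> P \<Longrightarrow> reach_in E P w z" and "P \<inter> B = {}"
    using P(1) unfolding ear_def by blast
  have "w \<notin> Q" "t \<notin> Q" using Q_off_B[of w b] Q_off_B[of t c] wb bB t by auto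
  have "reach_in E (P - Q) w z" if "z \<in> P - Q" for z
    by (rule reach_in_Diff_component[OF sym Preach \<open>w \<notin> Q\<close>, of z x]) (use that Q_closed in auto)
  then have "ear E B b w (P - Q)"
    using \<open>P \<inter> B = {}\<close> \<open>w \<in> P\<close> \<open>w \<notin> Q\<close> t \<open>t \<notin> Q\<close> unfolding ear_def by blast
  moreover have "P - Q \<subset> P" using \<open>y \<in> Q\<close> QP yP by auto
  ultimately show False using minP by blast
qed

lemma nonsep_Un_minimal_ear:
  assumes sym: "symp E"
    and B: "nonsep E B" and bB: "b \<in> B" and wb: "E w b"
    and P: "ear E B b w P" "finite P" and minP: "\<And>Q. Q \<subset> P \<Longrightarrow> \<not> ear E B b w Q"
  shows "nonsep E (B \<union> P)"
proof -
  have connB: "connected_in E B" and connBx: "\<And>x. x \<in> B \<Longrightarrow> connected_in E (B - {x})"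
    and "2 \<le> card B" "finite B"
    using B unfolding nonsep_def by auto
  obtain t0 c0 where t0: "t0 \<in> P" "c0 \<in> B - {b}" "E t0 c0" and "w \<in> P"
    and Preach: "\<And>z. z \<in> P \<Longrightarrow> reach_in E P w z" and "P \<inter> B = {}"
    using P(1) unfolding ear_def by blast
  have reach_through: "reach_in E (A \<union> P) y c"
    if "y \<in> P" "t \<in> P" "c \<in> A" "E t c" for y t c A
  proof -
    have "reach_in E P y t"
      using reach_in_trans[OF reach_in_sym[OF sym Preach[OF \<open>y \<in> P\<close>]] Preach[OF \<open>t \<in> P\<close>]] .
    then have "reach_in E (A \<union> P) y t" by (rule reach_in_mono) blast
    then show ?thesis by (rule reach_in_snoc) (use that in auto)
  qed
  have "connected_in E (B \<union> P)"
    by (rule connected_in_Un[OF sym connB bB])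
      (rule reach_through[OF _ \<open>w \<in> P\<close> bB wb])
  moreover have "connected_in E (B \<union> P - {x})" if "x \<in> B \<union> P" for x
  proof (cases "x \<in> B")
    case True
    have "\<exists>t\<in>P. \<exists>c\<in>B - {x}. E t c"
      by (cases "x = b") (use t0 \<open>w \<in> P\<close> wb bB in blast)+
    then obtain t c where tc: "t \<in> P" "c \<in> B - {x}" "E t c" by blast
    have eq: "B \<union> P - {x} = (B - {x}) \<union> P" using True \<open>P \<inter> B = {}\<close> by auto
    show ?thesis unfolding eq
      by (rule connected_in_Un[OF sym connBx[OF True] tc(2)]) (rule reach_through[OF _ tc(1,2,3)])
  next
    case False
    then have "x \<in> P" using that by auto
    have eq: "B \<union> P - {x} = B \<union> (P - {x})" using False by auto
    show ?thesis unfolding eq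
    proof (rule connected_in_Un[OF sym connB bB])
      fix y assume "y \<in> P - {x}"
      then show "reach_in E (B \<union> (P - {x})) y b"
        using minimal_ear_reach[OF sym connB bB wb P minP \<open>x \<in> P\<close>, of y] unfolding eq by blast
    qed
  qed
  moreover have "2 \<le> card (B \<union> P)"
    using \<open>2 \<le> card B\<close> card_mono[of "B \<union> P" B] \<open>finite B\<close> P(2) by auto
  ultimately show ?thesis using \<open>finite B\<close> P(2) unfolding nonsep_def by auto
qed

lemma block_neighbour_mem:
  assumes sg: "simple_graph V E" and blk: "is_block V E B" and bB: "b \<in> B"
    and "\<not> cut_vertex V E b" and bw: "E b w"
  shows "w \<in> B"
proof (rule ccontr)
  assume "w \<notin> B"
  have sym: "symp E" and "finite V" and wV: "w \<in> V"
    using sg bw unfolding simple_graph_def symp_def by blast+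
  have BV: "B \<subseteq> V" and nsB: "nonsep E B" and maxB: "\<And>S. B \<subset> S \<Longrightarrow> S \<subseteq> V \<Longrightarrow> \<not> nonsep E S"
    using blk unfolding is_block_def by auto
  have "B - {b} \<noteq> {}"
  proof
    assume "B - {b} = {}"
    then have "card B \<le> 1" using card_mono[of "{b}" B] by auto
    then show False using nsB unfolding nonsep_def by simp
  qed
  then obtain c where c: "c \<in> B - {b}" by blast
  have "connected_in E (V - {b})" using \<open>\<not> cut_vertex V E b\<close> bB BV unfolding cut_vertex_def by blast
  then have "reach_in E (V - {b}) w c"
    using wV c BV \<open>w \<notin> B\<close> bB unfolding connected_in_def by blast
  then obtain t c' where t: "reach_in E (V - {b} - B) w t" and c': "c' \<in> B - {b}" "E t c'"
    using reach_in_first_entry[of E "V - {b}" w c B] \<open>w \<notin> B\<close> c by blast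
  define P0 where "P0 = {y. reach_in E (V - {b} - B) w y}"
  have P0_sub: "P0 \<subseteq> V - B" unfolding P0_def using reach_in_mem by fastforce
  have "w \<in> P0" unfolding P0_def using wV \<open>w \<notin> B\<close> bB by (auto intro: reach_in_refl)
  moreover have "t \<in> P0" using t unfolding P0_def by blast
  moreover have "\<forall>z\<in>P0. reach_in E P0 w z"
    using reach_in_component[of E "V - {b} - B" w] unfolding P0_def by simp
  moreover have "P0 \<inter> B = {}" using P0_sub by blast
  ultimately have "ear E B b w P0" using c' unfolding ear_def by blast
  moreover have "finite P0" using P0_sub \<open>finite V\<close> finite_subset by blast
  ultimately obtain P where P: "ear E B b w P" "P \<subseteq> P0" "finite P"
    and minP: "\<And>Q. Q \<subset> P \<Longrightarrow> \<not> ear E B b w Q"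
    by (rule ex_minimal_ear) blast
  have "nonsep E (B \<union> P)" using nonsep_Un_minimal_ear[OF sym nsB bB sympD[OF sym bw] P(1,3) minP] .
  moreover have "B \<subset> B \<union> P" using P(1) \<open>w \<notin> B\<close> unfolding ear_def by auto
  ultimately show False using maxB BV P(2) P0_sub by blast
qed

section \<open>Simulating a strategy on the contracted graph\<close>

locale pendant_dominated =
  fixes V :: "'a set" and E :: "'a \<Rightarrow> 'a \<Rightarrow> bool" and D :: "'a set" and u :: 'a
  assumes sym: "symp E" and u_mem: "u \<in> V - D"
    and nbr: "\<And>d w. d \<in> D \<Longrightarrow> E d w \<Longrightarrow> w \<in> D \<or> w = u"
    and dom: "\<And>d. d \<in> D \<Longrightarrow> E u d"
begin

abbreviation "H \<equiv> V - D"
abbreviation "EH \<equiv> \<lambda>x y. E x y \<and> x \<in> V - D \<and> y \<in> V - D"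

definition shadow :: "'a \<Rightarrow> 'a" where "shadow x = (if x \<in> D then u else x)"

lemma capture_in_D: assumes "u \<in> set cs" "y \<in> D" shows "cops_win_from V E cs y"
proof -
  obtain i where i: "i < length cs" "cs ! i = u" using assms(1) by (auto simp: in_set_conv_nth)
  have "list_all2 (\<lambda>c c'. c' = c \<or> E c c') cs (cs[i := y])"
    using i dom[OF assms(2)] by (auto simp: list_all2_conv_all_nth nth_list_update)
  moreover have "y \<in> set (cs[i := y])" using i by (simp add: set_update_memI)
  ultimately show ?thesis by (blast intro: cops_win_from.step)
qed

lemma reach_from_D_guarded: "reach_in E (V - C) d y \<Longrightarrow> d \<in> D \<Longrightarrow> u \<in> C \<Longrightarrow> y \<in> D"
  by (induction rule: reach_in_induct) (use nbr in \<open>auto dest: reach_in_mem\<close>)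

lemma reach_outside_D_guarded:
  "reach_in E (V - C) a b \<Longrightarrow> a \<notin> D \<Longrightarrow> u \<in> C \<Longrightarrow> reach_in E (V - C - D) a b"
proof (induction rule: reach_in_induct)
  case base
  then show ?case by (auto intro: reach_in_refl)
next
  case (step y z)
  have IH: "reach_in E (V - C - D) a y" using step by simp
  have "z \<notin> D" using reach_in_mem[OF IH] nbr[OF _ sympD[OF sym step(2)]] \<open>u \<in> C\<close> by auto
  then show ?case using reach_in_snoc[OF IH step(2)] step(3) by blast
qed

lemma reach_shadow:
  assumes "reach_in E (V - C) a b" "shadow a \<notin> C"
  shows "reach_in EH (H - C) (shadow a) (shadow b)"
proof (cases "u \<in> C")
  case True
  then have "a \<notin> D" using assms(2) unfolding shadow_def by auto
  then have ab: "reach_in E (V - C - D) a b" using reach_outside_D_guarded assms(1) True by blast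
  then have "reach_in EH (H - C) a b" by (rule reach_in_map[where p = id, simplified]) auto
  then show ?thesis using \<open>a \<notin> D\<close> reach_in_mem[OF ab] unfolding shadow_def by auto
next
  case False
  show ?thesis
  proof (rule reach_in_map[OF assms(1)])
    fix x assume "x \<in> V - C" then show "shadow x \<in> H - C"
      using False u_mem unfolding shadow_def by auto
  next
    fix x y assume "x \<in> V - C" "y \<in> V - C" "E x y"
    then show "shadow x = shadow y \<or> EH (shadow x) (shadow y)"
      using nbr[of x y] nbr[of y x] sympD[OF sym] u_mem unfolding shadow_def by auto
  qed
qed

lemma cops_win_from_shadow:
  "cops_win_from H EH cs r \<Longrightarrow> set cs \<subseteq> H \<Longrightarrow> r0 \<in> V \<Longrightarrow> shadow r0 = r
     \<Longrightarrow> cops_win_from V E cs r0"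
proof (induction arbitrary: r0 rule: cops_win_from.induct)
  case (step cs cs' r)
  have move: "list_all2 (\<lambda>c c'. c' = c \<or> E c c') cs cs'"
    using step(1) by (rule list_all2_mono) auto
  have "set cs' \<subseteq> H" using step(1) \<open>set cs \<subseteq> H\<close> by (induction rule: list_all2_induct) auto
  have "cops_win_from V E cs' r'" if "reach_in E (V - set cs') r0 r'" for r'
  proof (cases "r \<in> set cs'")
    case True
    have "r0 \<notin> set cs'" using that unfolding reach_in_def by blast
    then have "r0 \<in> D" "u \<in> set cs'"
      using True \<open>shadow r0 = r\<close> unfolding shadow_def by (auto split: if_splits)
    then show ?thesis using capture_in_D reach_from_D_guarded that by blast
  next
    case False
    then have "reach_in EH (H - set cs') r (shadow r')"
      using reach_shadow that \<open>shadow r0 = r\<close> by blast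
    then show ?thesis using step(2) False \<open>set cs' \<subseteq> H\<close> reach_in_mem[OF that] by blast
  qed
  then show ?case using move by (blast intro: cops_win_from.step)
qed

lemma cops_win_contraction: assumes "cops_win H EH k" shows "cops_win V E k"
proof -
  obtain cs where cs: "length cs = k" "set cs \<subseteq> H" "\<forall>r\<in>H - set cs. cops_win_from H EH cs r"
    using assms unfolding cops_win_def by blast
  have "cops_win_from V E cs r" if r: "r \<in> V - set cs" for r
  proof (cases "shadow r \<in> set cs")
    case True
    then have "r \<in> D" "u \<in> set cs" using r unfolding shadow_def by (auto split: if_splits)
    then show ?thesis using capture_in_D by blast
  next
    case False
    then have "shadow r \<in> H - set cs" using r u_mem unfolding shadow_def by auto
    then show ?thesis using cops_win_from_shadow cs r by blast
  qed
  then show ?thesis using cs unfolding cops_win_def by blast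
qed

end

lemma cops_win_c_inf:
  assumes "finite V" shows "cops_win V E (c_inf V E)"
proof -
  obtain xs where "set xs = V" using finite_list[OF assms] by blast
  then have "cops_win V E (length xs)" unfolding cops_win_def by blast
  then show ?thesis unfolding c_inf_def by (rule LeastI)
qed

lemma c_inf_le: "cops_win V E k \<Longrightarrow> c_inf V E \<le> k"
  unfolding c_inf_def by (rule Least_le)

lemma (in pendant_dominated) c_inf_le_contraction:
  "finite V \<Longrightarrow> c_inf V E \<le> c_inf H EH"
  using c_inf_le cops_win_contraction cops_win_c_inf[of H EH] by blast

theorem mainTheorem11:
  fixes V :: "'a set" and E :: "'a \<Rightarrow> 'a \<Rightarrow> bool" and B :: "'a set" and u :: 'a
  assumes "simple_graph V E"
    and "connected_in E V"
    and "card (block_tree_vertices V E) > 1"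
    and "end_block V E B"
    and "u \<in> B" and "cut_vertex V E u"
    and "\<forall>v\<in>B - {u}. E u v"
  shows "c_inf (V - (B - {u})) (\<lambda>x y. E x y \<and> x \<in> V - (B - {u}) \<and> y \<in> V - (B - {u}))
           \<ge> c_inf V E"
proof -
  have blk: "is_block V E B" and "card {v\<in>B. cut_vertex V E v} = 1"
    using assms(4) unfolding end_block_def by auto
  then have cuts: "{v\<in>B. cut_vertex V E v} = {u}"
    using assms(5,6) by (metis (mono_tags, lifting) card_1_singletonE mem_Collect_eq singletonD)
  have "B \<subseteq> V" using blk unfolding is_block_def by auto
  interpret pendant_dominated V E "B - {u}" u
  proof
    fix d w assume "d \<in> B - {u}" "E d w"
    then show "w \<in> B - {u} \<or> w = u"
      using block_neighbour_mem[OF assms(1) blk] cuts by blast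
  qed (use assms(1,5,7) \<open>B \<subseteq> V\<close> in \<open>auto simp: simple_graph_def symp_def\<close>)
  show ?thesis using c_inf_le_contraction assms(1) unfolding simple_graph_def by blast
qed

end
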